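(* Let $\mathcal{D}\subset\mathbb{R}^d$ be bounded and convex with non-empty interior. Assume $\mathcal{C}\subset\Gamma\backslash G$ is compact and $\theta>\overline\rho(\mathcal{C},\mathcal{D}\times(0,1])$. Then there is a constant $C_\theta<\infty$ such that $\mathcal{G}(M)\leq C_\theta$ for all $M$ with $\Gamma M\in\mathcal{C}D(\theta)^{-1}$.
   Context: Let $G=\operatorname{SL}(d+1,\mathbb{R})$ and $\Gamma=\operatorname{SL}(d+1,\mathbb{Z})$; vectors are row vectors and $\mathbb{Z}^{d+1}M$ is the lattice spanned by the rows of $M$. For $M\in G$, $t\in\mathcal{D}$: $F(M,t)=\min\{y>0\mid (x,y)\in\mathbb{Z}^{d+1}M,\ x+t\in\mathcal{D}\}$ ($x\in\mathbb{R}^d$, $y\in\mathbb{R}$), and $\infty$ if no minimum exists. $\mathcal{G}(M)$ is the number of distinct values the function $t\mapsto F(M,t)$ attains as $t$ runs over $\mathcal{D}$. For a bounded $\mathcal{A}\subset\mathbb{R}^{d+1}$ with non-empty interior, $\rho(M,\mathcal{A})=\inf\{\theta>0\mid \theta\mathcal{A}+\mathbb{Z}^{d+1}M=\mathbb{R}^{d+1}\}$, and for $\mathcal{C}\subset\Gamma\backslash G$, $\overline\rho(\mathcal{C},\mathcal{A})=\sup_{\Gamma M\in\mathcal{C}}\rho(M,\mathcal{A})$. For $\theta>0$, $D(\theta)=\operatorname{diag}(\theta,\ldots,\theta,\theta^{-d})\in G$, and $\mathcal{C}D(\theta)^{-1}=\{\Gamma MD(\theta)^{-1}\mid\Gamma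 M\in\mathcal{C}\}$. *)

theory Defs
  imports "HOL-Analysis.Analysis" "HOL-Library.Extended_Nat" "HOL-Library.Extended_Real"
begin

(* R^d = real^'n (d = CARD('n)); R^{d+1} = real^('n option), where the coordinate
   None is the last coordinate y and Some i are the x-coordinates. Vectors are row
   vectors: the lattice Z^{d+1} M is { v v* M | v integral }. *)

type_synonym 'n mat1 = "real ^ ('n option) ^ ('n option)"

definition SLR :: "('n::finite) mat1 set" where
  "SLR = {M. det M = 1}"

definition SLZ :: "('n::finite) mat1 set" where
  "SLZ = {g. (\<forall>i j. g $ i $ j \<in> \<int>) \<and> det g = 1}"

definition lattice :: "('n::finite) mat1 \<Rightarrow> (real ^ ('n option)) set" where
  "lattice M = {v v* M | v. \<forall>i. v $ i \<in> \<int>}"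

definition xpart :: "real ^ ('n::finite option) \<Rightarrow> real ^ 'n" where
  "xpart v = (\<chi> i. v $ Some i)"

definition ypart :: "real ^ ('n::finite option) \<Rightarrow> real" where
  "ypart v = v $ None"

definition coset :: "('n::finite) mat1 \<Rightarrow> ('n mat1) set" where
  "coset M = {g ** M | g. g \<in> SLZ}"

definition GammaG :: "('n::finite) mat1 set set" where
  "GammaG = coset ` SLR"

definition quot_top :: "('n::finite) mat1 set topology" where
  "quot_top = topology (\<lambda>U. U \<subseteq> GammaG \<and>
      openin (top_of_set SLR) {M \<in> SLR. coset M \<in> U})"

definition Ffun :: "(real ^ 'n) set \<Rightarrow> ('n::finite) mat1 \<Rightarrow> real ^ 'n \<Rightarrow> ereal" where
  "Ffun D M t = (let S = {y. y > 0 \<and> (\<exists>v \<in> lattice M. ypart v = y \<and> xpart v + t \<in> D)} in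
     if (\<exists>y \<in> S. \<forall>z \<in> S. y \<le> z) then ereal (LEAST y. y \<in> S) else \<infinity>)"

definition Gcount :: "(real ^ 'n) set \<Rightarrow> ('n::finite) mat1 \<Rightarrow> enat" where
  "Gcount D M = (if finite (Ffun D M ` D) then enat (card (Ffun D M ` D)) else \<infinity>)"

definition rho :: "('n::finite) mat1 \<Rightarrow> (real ^ ('n option)) set \<Rightarrow> ereal" where
  "rho M A = Inf (ereal ` {\<theta>. \<theta> > 0 \<and>
      {\<theta> *\<^sub>R a + l | a l. a \<in> A \<and> l \<in> lattice M} = UNIV})"

definition rho_bar :: "('n::finite) mat1 set set \<Rightarrow> (real ^ ('n option)) set \<Rightarrow> ereal" where
  "rho_bar C A = (SUP M \<in> {M \<in> SLR. coset M \<in> C}. rho M A)"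

definition Dmat :: "real \<Rightarrow> ('n::finite) mat1" where
  "Dmat \<theta> = (\<chi> i j. if i = j then (if i = None then inverse (\<theta> ^ CARD('n)) else \<theta>) else 0)"

definition translate_set :: "('n::finite) mat1 set set \<Rightarrow> real \<Rightarrow> ('n mat1) set set" where
  "translate_set C \<theta> = {coset (M ** matrix_inv (Dmat \<theta>)) | M. M \<in> SLR \<and> coset M \<in> C}"

definition cyl :: "(real ^ 'n) set \<Rightarrow> (real ^ ('n::finite option)) set" where
  "cyl D = {v. xpart v \<in> D \<and> 0 < ypart v \<and> ypart v \<le> 1}"

end

theory Submission
  imports Defs "HOL-Library.Countable"
begin

(* Write M = M0 D(\<theta>)^-1 with \<Gamma>M0 \<in> C. As \<rho>(M0, D \<times> (0,1]) < \<theta>, some \<theta>' < \<theta> satisfies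
   \<theta>'(D \<times> (0,1]) + Z^(d+1) M0 = R^(d+1); applying D(\<theta>)^-1, the lattice of M has a covering set K
   whose points (x, y) have x \<in> (\<theta>'/\<theta>) D and 0 < y \<le> \<theta>^(d+1). Convexity of D then provides, for
   every t \<in> D, a lattice vector (x, y) with 0 < y \<le> \<theta>^(d+1) and x + t \<in> D, so each value F(M,t)
   is the height of such a short lattice vector. The short vectors P satisfy P + K \<subseteq> T for a cube T
   depending only on D and \<theta>, and since K covers modulo the lattice, a volume argument over a
   fundamental cell of the covolume-one lattice gives card P \<le> vol T. *)

(* Change_Of_Vars states the volume of linear images only for index types of class wellorder,
   so we well-order the coordinate type 'n option of R^{d+1} through its injection into nat. *)
instantiation option :: (countable) wellorder
begin
definition less_eq_option :: "'a option \<Rightarrow> 'a option \<Rightarrow> bool" where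
  "less_eq_option x y \<longleftrightarrow> to_nat x \<le> to_nat y"
definition less_option :: "'a option \<Rightarrow> 'a option \<Rightarrow> bool" where
  "less_option x y \<longleftrightarrow> to_nat x < to_nat y"
instance
proof
  fix P :: "'a option \<Rightarrow> bool" and a :: "'a option"
  assume step: "\<And>x. (\<And>y. y < x \<Longrightarrow> P y) \<Longrightarrow> P x"
  have "\<forall>x. to_nat x = n \<longrightarrow> P x" for n
    by (induction n rule: less_induct) (metis step less_option_def)
  then show "P a" by blast
qed (auto simp: less_eq_option_def less_option_def)
end

section \<open>Lattices spanned by the rows of a matrix\<close>

definition row_lattice :: "real^'m::finite^'m \<Rightarrow> (real^'m) set" where
  "row_lattice M = {v v* M | v. \<forall>i. v$i \<in> \<int>}"

lemma lattice_eq_row_lattice: "lattice M = row_lattice M"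
  by (simp add: lattice_def row_lattice_def)

lemma vector_matrix_mult_diff: "(x - y) v* (A::real^'m::finite^'k::finite) = x v* A - y v* A"
  by (simp add: vec_eq_iff vector_matrix_mult_def sum_subtractf algebra_simps)

lemma vector_matrix_mult_scaleR: "(c *\<^sub>R x) v* (A::real^'m::finite^'k::finite) = c *\<^sub>R (x v* A)"
  by (simp add: vec_eq_iff vector_matrix_mult_def sum_distrib_left algebra_simps)

lemma row_lattice_diff:
  assumes "a \<in> row_lattice M" "b \<in> row_lattice M"
  shows "a - b \<in> row_lattice M"
proof -
  obtain v w where "a = v v* M" "\<forall>i. v$i \<in> \<int>" "b = w v* M" "\<forall>i. w$i \<in> \<int>"
    using assms unfolding row_lattice_def by blast
  then have "a - b = (v - w) v* M" "\<forall>i. (v - w)$i \<in> \<int>"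
    by (simp_all add: vector_matrix_mult_diff)
  then show ?thesis unfolding row_lattice_def by blast
qed

lemma row_lattice_zero: "0 \<in> row_lattice M"
  unfolding row_lattice_def by (rule CollectI, rule exI[of _ 0]) simp

lemma row_lattice_uminus: "a \<in> row_lattice M \<Longrightarrow> - a \<in> row_lattice M"
  using row_lattice_diff[OF row_lattice_zero, of a M] by simp

lemma row_lattice_matrix_mult:
  "row_lattice (M ** N) = (\<lambda>v. v v* N) ` row_lattice M"
proof -
  have "v v* (M ** N) = (v v* M) v* N" for v by (simp add: vector_matrix_mul_assoc)
  then show ?thesis unfolding row_lattice_def by auto
qed

lemma row_lattice_integral_mult_subset:
  assumes "\<forall>i j. g$i$j \<in> \<int>"
  shows "row_lattice (g ** X) \<subseteq> row_lattice X"
proof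
  fix a assume "a \<in> row_lattice (g ** X)"
  then obtain v where v: "a = (v v* g) v* X" "\<forall>i. v$i \<in> \<int>"
    unfolding row_lattice_def by (auto simp: vector_matrix_mul_assoc)
  have "\<forall>j. (v v* g)$j \<in> \<int>"
    using v(2) assms by (auto simp: vector_matrix_mult_def intro!: Ints_sum Ints_mult)
  then show "a \<in> row_lattice X" using v(1) unfolding row_lattice_def by blast
qed

lemma mat_1_in_SLZ: "mat 1 \<in> SLZ"
  unfolding SLZ_def by (auto simp: det_I) (auto simp: mat_def)

lemma coset_refl: "M \<in> coset M"
proof -
  have "M = mat 1 ** M" by simp
  then show ?thesis unfolding coset_def using mat_1_in_SLZ by blast
qed

lemma lattice_coset_eq:
  assumes "coset M = coset X"
  shows "lattice M = lattice X"
proof -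
  have "row_lattice A \<subseteq> row_lattice B" if A: "A \<in> coset B" for A B :: "'n::finite mat1"
  proof -
    obtain g where "A = g ** B" "g \<in> SLZ" using A unfolding coset_def by blast
    then show ?thesis using row_lattice_integral_mult_subset[of g B] unfolding SLZ_def by blast
  qed
  then have "row_lattice M \<subseteq> row_lattice X" "row_lattice X \<subseteq> row_lattice M"
    using assms coset_refl by metis+
  then show ?thesis unfolding lattice_eq_row_lattice by (rule subset_antisym)
qed

lemma finite_integral_vectors_bounded:
  fixes W :: "(real^'m::finite) set"
  assumes "bounded W"
  shows "finite {v\<in>W. \<forall>i. v$i \<in> \<int>}"
proof -
  obtain r where r: "\<forall>v\<in>W. norm v \<le> r" using assms bounded_iff by blast
  define B where "B = (of_int ` {-\<lceil>r\<rceil>..\<lceil>r\<rceil>} :: real set)"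
  have B: "v$i \<in> B" if v: "v \<in> W" "\<forall>i. v$i \<in> \<int>" for v i
  proof -
    obtain k where k: "v$i = of_int k" using v(2) Ints_cases by blast
    have "\<bar>v$i\<bar> \<le> r" using r v(1) component_le_norm_cart order_trans by blast
    then have "real_of_int \<bar>k\<bar> \<le> r" using k by simp
    then have "\<bar>k\<bar> \<le> \<lceil>r\<rceil>" by (metis ceiling_mono ceiling_of_int)
    then show ?thesis using k unfolding B_def by (intro image_eqI[of _ _ k]) (auto simp: abs_le_iff)
  qed
  have "{v\<in>W. \<forall>i. v$i \<in> \<int>} \<subseteq> (\<lambda>f. \<chi> i. f i) ` PiE UNIV (\<lambda>_. B)"
  proof
    fix v assume v: "v \<in> {v\<in>W. \<forall>i. v$i \<in> \<int>}"
    then have "(\<lambda>i. v$i) \<in> PiE UNIV (\<lambda>_. B)" using B by auto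
    then show "v \<in> (\<lambda>f. \<chi> i. f i) ` PiE UNIV (\<lambda>_. B)" by (intro image_eqI[of v]) auto
  qed
  moreover have "finite (PiE (UNIV::'m set) (\<lambda>_. B))" unfolding B_def by (intro finite_PiE) auto
  ultimately show ?thesis using finite_subset by blast
qed

lemma vector_matrix_mult_cancel:
  assumes "det (M::real^'m::finite^'m) \<noteq> 0"
  obtains N where "\<And>x. (x v* M) v* N = x"
proof -
  obtain N where "M ** N = mat 1" using assms invertible_det_nz invertible_def by blast
  then have "\<And>x. (x v* M) v* N = x" by (simp add: vector_matrix_mul_assoc)
  then show ?thesis using that by blast
qed

lemma bounded_linear_vector_matrix_mult: "bounded_linear (\<lambda>x. x v* (N::real^'m::finite^'k::finite))"
proof -
  have "(\<lambda>x. x v* N) = (\<lambda>x. transpose N *v x)" by simp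
  then show ?thesis using matrix_vector_mul_bounded_linear by metis
qed

lemma finite_row_lattice_Int_bounded:
  assumes "det (M::real^'m::finite^'m) \<noteq> 0" "bounded S"
  shows "finite (row_lattice M \<inter> S)"
proof -
  obtain N where N: "\<And>x. (x v* M) v* N = x" using vector_matrix_mult_cancel assms(1) by blast
  define W where "W = (\<lambda>x. x v* N) ` S"
  have "finite {v\<in>W. \<forall>i. v$i \<in> \<int>}"
    unfolding W_def by (intro finite_integral_vectors_bounded bounded_linear_image assms(2)
        bounded_linear_vector_matrix_mult)
  moreover have "row_lattice M \<inter> S \<subseteq> (\<lambda>v. v v* M) ` {v\<in>W. \<forall>i. v$i \<in> \<int>}"
  proof
    fix a assume a: "a \<in> row_lattice M \<inter> S"
    then obtain v where v: "a = v v* M" "\<forall>i. v$i \<in> \<int>" unfolding row_lattice_def by blast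
    then have "v \<in> W" using a N unfolding W_def by (metis IntD2 imageI)
    then show "a \<in> (\<lambda>v. v v* M) ` {v\<in>W. \<forall>i. v$i \<in> \<int>}" using v by blast
  qed
  ultimately show ?thesis using finite_subset by blast
qed

section \<open>Counting lattice points by volume\<close>

definition unit_cell :: "(real^'m::finite) set" where
  "unit_cell = {v. \<forall>i. 0 \<le> v$i \<and> v$i < 1}"

lemma unit_cell_between: "box 0 One \<subseteq> unit_cell" "unit_cell \<subseteq> cbox 0 One"
  by (auto simp: unit_cell_def mem_box_cart less_imp_le one_index Cart_1[symmetric])

lemma bounded_unit_cell: "bounded unit_cell"
  using unit_cell_between(2) bounded_cbox bounded_subset by blast

lemma lmeasurable_unit_cell: "unit_cell \<in> lmeasurable"
proof -
  have "convex unit_cell"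
    unfolding unit_cell_def convex_def by (auto intro: convex_bound_lt add_nonneg_nonneg)
  then show ?thesis using measurable_convex bounded_unit_cell by blast
qed

lemma measure_unit_cell: "measure lebesgue (unit_cell :: (real^'m::finite) set) = 1"
proof -
  have "measure lebesgue (cbox 0 (One::real^'m)) = 1" "measure lebesgue (box 0 (One::real^'m)) = 1"
    by (simp_all add: measure_completion)
  then show ?thesis
    using measure_mono_fmeasurable[OF unit_cell_between(1)] measure_mono_fmeasurable[OF unit_cell_between(2)]
      lmeasurable_unit_cell
    by (metis antisym fmeasurableD lmeasurable_cbox sets_completionI_sets sets_lborel open_box borel_open)
qed

definition fundamental_cell :: "real^'m::finite^'m \<Rightarrow> (real^'m) set" where
  "fundamental_cell M = (\<lambda>v. v v* M) ` unit_cell"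

lemma linear_vector_matrix_mult: "linear (\<lambda>v. v v* (M::real^'m::finite^'k::finite))"
  using bounded_linear_vector_matrix_mult bounded_linear.linear by blast

lemma bounded_fundamental_cell: "bounded (fundamental_cell M)"
  unfolding fundamental_cell_def
  using bounded_linear_image[OF bounded_unit_cell bounded_linear_vector_matrix_mult] .

lemma lmeasurable_fundamental_cell:
  "fundamental_cell (M::real^'m::{finite,wellorder}^'m::_) \<in> lmeasurable"
  unfolding fundamental_cell_def
  using measurable_linear_image[OF linear_vector_matrix_mult lmeasurable_unit_cell] .

lemma measure_fundamental_cell:
  "measure lebesgue (fundamental_cell (M::real^'m::{finite,wellorder}^'m::_)) = \<bar>det M\<bar>"
proof -
  have "(\<lambda>v. v v* M) = (*v) (transpose M)" by (simp add: fun_eq_iff)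
  then have "matrix (\<lambda>v. v v* M) = transpose M" by (simp add: matrix_of_matrix_vector_mul)
  then show ?thesis
    unfolding fundamental_cell_def
    using measure_linear_image[OF linear_vector_matrix_mult[of M] lmeasurable_unit_cell]
    by (simp add: det_transpose measure_unit_cell)
qed

lemma fundamental_cell_translates_disjoint:
  assumes "det M \<noteq> 0" "x \<in> fundamental_cell M" "x' \<in> fundamental_cell M"
    and "l \<in> row_lattice M" "l' \<in> row_lattice M" "x + l = x' + l'"
  shows "l = l'"
proof -
  obtain N where N: "\<And>x. (x v* M) v* N = x" using vector_matrix_mult_cancel assms(1) by blast
  obtain u u' where u: "x = u v* M" "u \<in> unit_cell" and u': "x' = u' v* M" "u' \<in> unit_cell"
    using assms(2,3) unfolding fundamental_cell_def by blast
  obtain v v' where v: "l = v v* M" "\<forall>i. v$i \<in> \<int>" and v': "l' = v' v* M" "\<forall>i. v'$i \<in> \<int>"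
    using assms(4,5) unfolding row_lattice_def by blast
  have "(u + v) v* M = (u' + v') v* M"
    using assms(6) u u' v v' by (simp add: vector_matrix_left_distrib)
  then have uv: "u + v = u' + v'" using N by metis
  have "v$i = v'$i" for i
  proof -
    have "u$i - u'$i = v'$i - v$i" using uv by (simp add: vec_eq_iff algebra_simps)
    moreover have "v'$i - v$i \<in> \<int>" using v v' by simp
    moreover have "\<bar>u$i - u'$i\<bar> < 1"
    proof -
      have "0 \<le> u$i" "u$i < 1" "0 \<le> u'$i" "u'$i < 1" using u u' unfolding unit_cell_def by auto
      then show ?thesis by linarith
    qed
    ultimately show ?thesis using Ints_nonzero_abs_less1 by fastforce
  qed
  then show "l = l'" using v v' by (metis vec_eq_iff)
qed

lemma lmeasurable_cell_slice:
  fixes M :: "real^'m::{finite,wellorder}^'m::_"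
  assumes "T \<in> lmeasurable"
  shows "{x \<in> fundamental_cell M. x + l \<in> T} \<in> lmeasurable"
proof -
  have "{x \<in> fundamental_cell M. x + l \<in> T} = fundamental_cell M \<inter> (+) (- l) ` T"
    by (auto simp: image_iff) (metis add.commute diff_add_cancel uminus_add_conv_diff)
  then show ?thesis using lmeasurable_fundamental_cell
    by (metis fmeasurable_Int_fmeasurable fmeasurableD[OF measurable_translation[OF assms]])
qed

lemma sum_measure_cell_slices_le:
  fixes M :: "real^'m::{finite,wellorder}^'m::_"
  assumes "det M \<noteq> 0" "finite Z" "Z \<subseteq> row_lattice M" "T \<in> lmeasurable"
  shows "(\<Sum>l\<in>Z. measure lebesgue {x \<in> fundamental_cell M. x + l \<in> T}) \<le> measure lebesgue T"
proof -
  let ?Q = "fundamental_cell M"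
  define U where "U l = {x \<in> ?Q. x + l \<in> T}" for l
  have U_lmeasurable: "U l \<in> lmeasurable" for l
    unfolding U_def using lmeasurable_cell_slice[OF assms(4)] .
  define V where "V l = (+) l ` U l" for l
  have V_lmeasurable: "V l \<in> lmeasurable" for l
    unfolding V_def using measurable_translation[OF U_lmeasurable] .
  have "pairwise (\<lambda>i j. disjnt (V i) (V j)) Z"
  proof (rule pairwiseI)
    fix i j assume ij: "i \<in> Z" "j \<in> Z" "i \<noteq> j"
    have "i = j" if "x \<in> ?Q" "y \<in> ?Q" "i + x = j + y" for x y
      using fundamental_cell_translates_disjoint[OF assms(1) that(1,2), of i j] ij(1,2) assms(3) that(3)
      by (auto simp: add.commute)
    then show "disjnt (V i) (V j)" unfolding disjnt_def V_def U_def using ij(3) by auto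
  qed
  then have "(\<Sum>l\<in>Z. measure lebesgue (U l)) = measure lebesgue (\<Union>l\<in>Z. V l)"
    using measure_UNION'[OF assms(2), of V lebesgue] V_lmeasurable
    by (simp add: V_def measure_translation)
  also have "\<dots> \<le> measure lebesgue T"
  proof (rule measure_mono_fmeasurable[OF _ _ assms(4)])
    show "(\<Union>l\<in>Z. V l) \<subseteq> T" unfolding V_def U_def by (auto simp: add.commute)
    show "(\<Union>l\<in>Z. V l) \<in> sets lebesgue"
      using assms(2) V_lmeasurable by (intro sets.finite_UN) (auto simp: fmeasurableD)
  qed
  finally show ?thesis unfolding U_def .
qed

(* Every x in the fundamental cell lies in K + l0, so the translates p - l0 (p \<in> P) are card P
   distinct lattice vectors l with x + l \<in> T; integrating this count over the cell gives the bound. *)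
lemma card_row_lattice_subset_le_measure:
  fixes M :: "real^'m::{finite,wellorder}^'m::_"
  assumes "det M \<noteq> 0"
    and cover: "\<forall>z. \<exists>k\<in>K. \<exists>l\<in>row_lattice M. z = k + l"
    and P: "finite P" "P \<subseteq> row_lattice M"
    and PK: "\<forall>p\<in>P. \<forall>k\<in>K. p + k \<in> T"
    and T: "T \<in> lmeasurable" "bounded T"
  shows "real (card P) * \<bar>det M\<bar> \<le> measure lebesgue T"
proof -
  let ?Q = "fundamental_cell M"
  define U where "U l = {x \<in> ?Q. x + l \<in> T}" for l
  define Z where "Z = row_lattice M \<inter> {l. \<exists>x\<in>?Q. x + l \<in> T}"
  have "{l. \<exists>x\<in>?Q. x + l \<in> T} \<subseteq> (\<Union>t\<in>T. \<Union>x\<in>?Q. {t - x})"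
    by (auto simp: algebra_simps)
  then have "bounded {l. \<exists>x\<in>?Q. x + l \<in> T}"
    using bounded_differences[OF T(2) bounded_fundamental_cell] bounded_subset by blast
  then have Z_finite: "finite Z"
    unfolding Z_def using finite_row_lattice_Int_bounded[OF assms(1)] by blast
  have integrable_U: "integrable lebesgue (indicat_real (U l))" for l
    using lmeasurable_cell_slice[OF T(1), of M l] unfolding U_def
    by (intro integrable_real_indicator) (auto simp: fmeasurable_def)
  have integrable_Q: "integrable lebesgue (indicat_real ?Q)"
    using lmeasurable_fundamental_cell[of M] by (intro integrable_real_indicator) (auto simp: fmeasurable_def)
  have count: "real (card P) * indicator ?Q x \<le> (\<Sum>l\<in>Z. indicator (U l) x)" for x
  proof (cases "x \<in> ?Q")
    case True
    obtain k l0 where k: "k \<in> K" "l0 \<in> row_lattice M" "x = k + l0" using cover by blast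
    have "(\<lambda>p. p - l0) ` P \<subseteq> {l\<in>Z. x \<in> U l}"
    proof
      fix l assume "l \<in> (\<lambda>p. p - l0) ` P"
      then obtain p where p: "p \<in> P" "l = p - l0" by blast
      have "x + l = p + k" using p k by (simp add: algebra_simps)
      then have "x + l \<in> T" using PK p k by metis
      moreover have "l \<in> row_lattice M" using p P k row_lattice_diff by blast
      ultimately show "l \<in> {l\<in>Z. x \<in> U l}" using True unfolding Z_def U_def by blast
    qed
    then have "card P \<le> card {l\<in>Z. x \<in> U l}"
      using Z_finite by (intro card_inj_on_le[of "\<lambda>p. p - l0"]) (auto simp: inj_on_def)
    moreover have "(\<Sum>l\<in>Z. indicator (U l) x) = real (card {l\<in>Z. x \<in> U l})"
      using Z_finite by (simp add: indicator_def sum.inter_filter[symmetric] Int_def)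
    ultimately show ?thesis using True by simp
  qed (simp add: sum_nonneg)
  have "real (card P) * \<bar>det M\<bar> = integral\<^sup>L lebesgue (\<lambda>x. real (card P) * indicator ?Q x)"
    using lmeasurable_fundamental_cell by (simp add: measure_fundamental_cell)
  also have "\<dots> \<le> integral\<^sup>L lebesgue (\<lambda>x. \<Sum>l\<in>Z. indicator (U l) x)"
    using count integrable_U integrable_Q by (intro integral_mono) auto
  also have "\<dots> = (\<Sum>l\<in>Z. measure lebesgue (U l))"
    using integrable_U by (simp add: integral_indicator)
  also have "\<dots> \<le> measure lebesgue T"
    unfolding U_def using sum_measure_cell_slices_le[OF assms(1) Z_finite _ T(1)] Z_def by blast
  finally show ?thesis .
qed

section \<open>Coordinates and the matrices D(\<theta>)\<close>

lemma xpart_add: "xpart (a + b) = xpart a + xpart b"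
  and xpart_diff: "xpart (a - b) = xpart a - xpart b"
  and xpart_scaleR: "xpart (c *\<^sub>R a) = c *\<^sub>R xpart a"
  and ypart_add: "ypart (a + b) = ypart a + ypart b"
  and ypart_diff: "ypart (a - b) = ypart a - ypart b"
  and ypart_scaleR: "ypart (c *\<^sub>R a) = c * ypart a"
  by (simp_all add: xpart_def ypart_def vec_eq_iff)

lemma abs_component_le_parts:
  "\<bar>v $ i\<bar> \<le> (case i of None \<Rightarrow> \<bar>ypart v\<bar> | Some j \<Rightarrow> norm (xpart v))"
proof (cases i)
  case (Some j)
  have "v $ Some j = xpart v $ j" by (simp add: xpart_def)
  then show ?thesis using Some component_le_norm_cart by (metis option.simps(5))
qed (simp add: ypart_def)

lemma xpart_vector_matrix_mult_Dmat: "xpart (a v* Dmat c) = c *\<^sub>R xpart a"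
  and ypart_vector_matrix_mult_Dmat: "ypart (a v* (Dmat c :: 'n::finite mat1)) = ypart a / c ^ CARD('n)"
  by (simp_all add: xpart_def ypart_def vec_eq_iff Dmat_def vector_matrix_mult_def if_distrib
      divide_inverse mult.commute cong: if_cong)

lemma diagonal_matrix_mult:
  "((\<chi> i j. if i = j then f i else 0) :: real^'m::finite^'m) ** (\<chi> i j. if i = j then g i else 0)
   = (\<chi> i j. if i = j then f i * g i else 0)"
proof -
  have "(\<Sum>k\<in>UNIV. (if i = k then f i else 0) * (if k = j then g k else 0)) =
        (if i = j then f i * g i else 0)" for i j :: 'm
  proof -
    have "(\<Sum>k\<in>UNIV. (if i = k then f i else 0) * (if k = j then g k else 0)) =
          (\<Sum>k\<in>UNIV. if k = i then f i * (if k = j then g k else 0) else 0)"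
      by (rule sum.cong) auto
    then show ?thesis by simp
  qed
  then show ?thesis by (simp add: vec_eq_iff matrix_matrix_mult_def)
qed

lemma Dmat_mult_Dmat_inverse:
  assumes "c \<noteq> 0"
  shows "(Dmat c :: ('n::finite) mat1) ** Dmat (inverse c) = mat 1"
  unfolding Dmat_def diagonal_matrix_mult using assms
  by (simp add: vec_eq_iff mat_def power_inverse)

lemma matrix_inv_Dmat:
  assumes "c \<noteq> 0"
  shows "matrix_inv (Dmat c :: ('n::finite) mat1) = Dmat (inverse c)"
  unfolding matrix_inv_def
proof (rule some_equality)
  let ?A = "Dmat c :: 'n mat1" and ?B = "Dmat (inverse c) :: 'n mat1"
  have AB: "?A ** ?B = mat 1" and BA: "?B ** ?A = mat 1"
    using Dmat_mult_Dmat_inverse[of c] Dmat_mult_Dmat_inverse[of "inverse c"] assms by simp_all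
  then show "?A ** ?B = mat 1 \<and> ?B ** ?A = mat 1" by simp
  fix B' assume "?A ** B' = mat 1 \<and> B' ** ?A = mat 1"
  then have "B' ** ?A = mat 1" by simp
  have "B' = B' ** (?A ** ?B)" using AB by simp
  also have "\<dots> = (B' ** ?A) ** ?B" by (simp add: matrix_mul_assoc)
  finally show "B' = ?B" using \<open>B' ** ?A = mat 1\<close> by simp
qed

lemma covering_of_translate_set:
  fixes M :: "'n::finite mat1"
  assumes "coset M \<in> translate_set C \<theta>" "\<theta> > 0" "rho_bar C A < ereal \<theta>"
  obtains \<theta>' where "0 < \<theta>'" "\<theta>' < \<theta>"
    "\<forall>z. \<exists>a\<in>A. \<exists>l\<in>lattice M. z = \<theta>' *\<^sub>R (a v* Dmat (inverse \<theta>)) + l"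
proof -
  let ?D = "Dmat \<theta> :: 'n mat1" and ?Di = "Dmat (inverse \<theta>) :: 'n mat1"
  obtain M0 where M0: "coset M = coset (M0 ** matrix_inv ?D)" "M0 \<in> SLR" "coset M0 \<in> C"
    using assms(1) unfolding translate_set_def by blast
  have "rho M0 A \<le> rho_bar C A"
    unfolding rho_bar_def using M0(2,3) by (intro SUP_upper) auto
  then have "rho M0 A < ereal \<theta>" using assms(3) by simp
  then obtain \<theta>' where \<theta>': "0 < \<theta>'" "\<theta>' < \<theta>"
    and cover0: "{\<theta>' *\<^sub>R a + l | a l. a \<in> A \<and> l \<in> lattice M0} = UNIV"
    unfolding rho_def Inf_less_iff by auto
  have D_Di: "?D ** ?Di = mat 1" using assms(2) by (intro Dmat_mult_Dmat_inverse) simp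
  have "matrix_inv ?D = ?Di" using assms(2) by (intro matrix_inv_Dmat) simp
  then have lattice_M: "lattice M = (\<lambda>v. v v* ?Di) ` lattice M0"
    using lattice_coset_eq[OF M0(1)] by (simp add: lattice_eq_row_lattice row_lattice_matrix_mult)
  have "\<exists>a\<in>A. \<exists>l\<in>lattice M. z = \<theta>' *\<^sub>R (a v* ?Di) + l" for z
  proof -
    have "z v* ?D \<in> {\<theta>' *\<^sub>R a + l | a l. a \<in> A \<and> l \<in> lattice M0}" using cover0 by simp
    then obtain a l where al: "a \<in> A" "l \<in> lattice M0" "z v* ?D = \<theta>' *\<^sub>R a + l" by blast
    have "z = (z v* ?D) v* ?Di"
      using D_Di by (simp add: vector_matrix_mul_assoc)
    also have "\<dots> = \<theta>' *\<^sub>R (a v* ?Di) + l v* ?Di"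
      using al(3) by (simp add: vector_matrix_left_distrib vector_matrix_mult_scaleR)
    finally show ?thesis using al(1,2) lattice_M by blast
  qed
  then show ?thesis using that \<theta>' by blast
qed

lemma scaled_cyl_parts:
  fixes a :: "real^'n::finite option"
  assumes "a \<in> cyl D" "0 < \<theta>'" "\<theta>' < \<theta>"
  defines "k \<equiv> \<theta>' *\<^sub>R (a v* Dmat (inverse \<theta>))"
  shows "(\<exists>b\<in>D. xpart k = (\<theta>' / \<theta>) *\<^sub>R b) \<and> 0 < ypart k \<and> ypart k \<le> \<theta> ^ Suc CARD('n)"
proof -
  have a: "xpart a \<in> D" "0 < ypart a" "ypart a \<le> 1" using assms(1) cyl_def by auto
  have "xpart k = (\<theta>' / \<theta>) *\<^sub>R xpart a"
    unfolding k_def xpart_scaleR xpart_vector_matrix_mult_Dmat by (simp add: divide_inverse)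
  moreover have "ypart k = \<theta>' * \<theta> ^ CARD('n) * ypart a"
    unfolding k_def ypart_scaleR ypart_vector_matrix_mult_Dmat by (simp add: power_inverse divide_inverse mult_ac)
  moreover have "\<theta>' * \<theta> ^ CARD('n) * ypart a \<le> \<theta> * \<theta> ^ CARD('n) * 1"
    using assms a by (intro mult_mono) auto
  ultimately show ?thesis using a assms by auto
qed

section \<open>Short lattice vectors\<close>

definition short_vectors :: "(real^'n::finite) set \<Rightarrow> 'n mat1 \<Rightarrow> real \<Rightarrow> (real^'n option) set" where
  "short_vectors D M Y = lattice M \<inter> {v. 0 < ypart v \<and> ypart v \<le> Y \<and> (\<exists>t\<in>D. xpart v + t \<in> D)}"

lemma Ffun_mem_short_heights:
  assumes "finite (short_vectors D M Y)" "t \<in> D"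
    and "\<exists>v\<in>lattice M. 0 < ypart v \<and> ypart v \<le> Y \<and> xpart v + t \<in> D"
  shows "Ffun D M t \<in> ereal ` ypart ` short_vectors D M Y"
proof -
  define S where "S = {y. y > 0 \<and> (\<exists>v \<in> lattice M. ypart v = y \<and> xpart v + t \<in> D)}"
  have S_short: "S \<inter> {..Y} \<subseteq> ypart ` short_vectors D M Y"
    unfolding S_def short_vectors_def using assms(2) by auto
  then have finite: "finite (S \<inter> {..Y})" using assms(1) finite_subset by blast
  have nonempty: "S \<inter> {..Y} \<noteq> {}" using assms(3) unfolding S_def by auto
  define m where "m = Min (S \<inter> {..Y})"
  have m: "m \<in> S \<inter> {..Y}" unfolding m_def using finite nonempty by (rule Min_in)
  have m_le: "\<forall>z\<in>S. m \<le> z"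
  proof
    fix z assume z: "z \<in> S"
    show "m \<le> z"
    proof (cases "z \<le> Y")
      case True
      then show ?thesis unfolding m_def using finite z by (intro Min_le) auto
    qed (use m in auto)
  qed
  then have "(LEAST y. y \<in> S) = m" using m by (intro Least_equality) auto
  moreover have "\<exists>y\<in>S. \<forall>z\<in>S. y \<le> z" using m m_le by blast
  ultimately have "Ffun D M t = ereal m"
    unfolding Ffun_def Let_def S_def[symmetric] by simp
  then show ?thesis using m S_short by blast
qed

lemma Gcount_le_card_short_vectors:
  assumes "finite (short_vectors D M Y)"
    and "\<forall>t\<in>D. \<exists>v\<in>lattice M. 0 < ypart v \<and> ypart v \<le> Y \<and> xpart v + t \<in> D"
  shows "Gcount D M \<le> enat (card (short_vectors D M Y))"
proof -
  have Ffun_values: "Ffun D M ` D \<subseteq> ereal ` ypart ` short_vectors D M Y"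
    using Ffun_mem_short_heights[OF assms(1)] assms(2) by (intro image_subsetI) simp
  then have "finite (Ffun D M ` D)" using assms(1) finite_subset by blast
  moreover have "card (Ffun D M ` D) \<le> card (ereal ` ypart ` short_vectors D M Y)"
    using Ffun_values assms(1) by (intro card_mono) auto
  moreover have "\<dots> \<le> card (short_vectors D M Y)"
    using assms(1) by (metis card_image_le finite_imageI le_trans)
  ultimately show ?thesis unfolding Gcount_def by simp
qed

(* Writing (\<mu>t, 0) = k + l, the vector v = -l = k - (\<mu>t, 0) has the height of k, and
   xpart v + t = \<mu>a + (1 - \<mu>)t is a convex combination of points of D. *)
lemma exists_short_lattice_vector:
  fixes L K :: "(real^'n::finite option) set"
  assumes "convex D" "t \<in> D" "0 \<le> \<mu>" "\<mu> \<le> 1"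
    and cover: "\<forall>z. \<exists>k\<in>K. \<exists>l\<in>L. z = k + l"
    and K: "\<forall>k\<in>K. (\<exists>a\<in>D. xpart k = \<mu> *\<^sub>R a) \<and> 0 < ypart k \<and> ypart k \<le> Y"
    and L: "\<forall>l\<in>L. - l \<in> L"
  shows "\<exists>v\<in>L. 0 < ypart v \<and> ypart v \<le> Y \<and> xpart v + t \<in> D"
proof -
  define z :: "real^'n option" where "z = (\<chi> i. case i of None \<Rightarrow> 0 | Some j \<Rightarrow> \<mu> * t$j)"
  obtain k l where kl: "k \<in> K" "l \<in> L" "z = k + l" using cover by blast
  obtain a where a: "a \<in> D" "xpart k = \<mu> *\<^sub>R a" using K kl(1) by blast
  have v: "- l = k - z" using kl(3) by simp
  have "xpart (- l) + t = \<mu> *\<^sub>R a + (1 - \<mu>) *\<^sub>R t"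
    unfolding v xpart_diff a(2) by (simp add: z_def xpart_def vec_eq_iff algebra_simps)
  also have "\<dots> \<in> D" using convexD[OF assms(1) a(1) assms(2)] assms(3,4) by simp
  finally have "xpart (- l) + t \<in> D" .
  moreover have "ypart (- l) = ypart k" unfolding v ypart_diff by (simp add: z_def ypart_def)
  moreover have "- l \<in> L" using L kl(2) by blast
  moreover have "0 < ypart k \<and> ypart k \<le> Y" using K kl(1) by blast
  ultimately show ?thesis by (intro bexI[of _ "- l"]) auto
qed

definition centered_cube :: "real \<Rightarrow> (real^'m::finite) set" where
  "centered_cube c = cbox (- (\<chi> _. c)) (\<chi> _. c)"

lemma mem_centered_cube: "v \<in> centered_cube c \<longleftrightarrow> (\<forall>i. \<bar>v$i\<bar> \<le> c)"
  unfolding centered_cube_def mem_box_cart by (simp add: abs_le_iff minus_le_iff conj_commute)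

lemma mem_centered_cube_if_parts:
  assumes "norm (xpart v) \<le> c" "\<bar>ypart v\<bar> \<le> c"
  shows "v \<in> centered_cube c"
  unfolding mem_centered_cube
proof
  fix i show "\<bar>v $ i\<bar> \<le> c" using abs_component_le_parts[of v i] assms by (cases i) auto
qed

lemma short_vector_parts:
  assumes "v \<in> short_vectors D M Y" "\<forall>x\<in>D. norm x \<le> R"
  shows "norm (xpart v) \<le> 2 * R" "0 < ypart v" "ypart v \<le> Y"
proof -
  obtain t where t: "t \<in> D" "xpart v + t \<in> D" using assms(1) unfolding short_vectors_def by blast
  have "norm (xpart v) \<le> norm (xpart v + t) + norm t"
    by (metis add_diff_cancel_right' norm_triangle_ineq4)
  moreover have "norm (xpart v + t) \<le> R" "norm t \<le> R" using assms(2) t by auto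
  ultimately show "norm (xpart v) \<le> 2 * R" by linarith
  show "0 < ypart v" "ypart v \<le> Y" using assms(1) unfolding short_vectors_def by auto
qed

lemma card_short_vectors_le_measure:
  fixes D :: "(real^'n::finite) set" and M :: "'n mat1"
  assumes "det M = 1" "\<forall>x\<in>D. norm x \<le> R" "0 \<le> \<mu>" "\<mu> \<le> 1"
    and cover: "\<forall>z. \<exists>k\<in>K. \<exists>l\<in>lattice M. z = k + l"
    and K: "\<forall>k\<in>K. (\<exists>a\<in>D. xpart k = \<mu> *\<^sub>R a) \<and> 0 < ypart k \<and> ypart k \<le> Y"
  shows "finite (short_vectors D M Y)"
    and "real (card (short_vectors D M Y))
           \<le> measure lebesgue (centered_cube (3 * R + 2 * Y) :: (real^'n option) set)"
proof -
  let ?V = "short_vectors D M Y" and ?T = "centered_cube (3 * R + 2 * Y) :: (real^'n option) set"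
  have "?V \<subseteq> centered_cube (2 * R + Y)"
  proof
    fix v assume "v \<in> ?V"
    with short_vector_parts[OF _ assms(2)] show "v \<in> centered_cube (2 * R + Y)"
      by (intro mem_centered_cube_if_parts) (fastforce dest: order_trans[OF norm_ge_zero])+
  qed
  then have "?V \<subseteq> row_lattice M \<inter> centered_cube (2 * R + Y)"
    unfolding short_vectors_def lattice_eq_row_lattice by blast
  moreover have "finite (row_lattice M \<inter> centered_cube (2 * R + Y))"
    using assms(1) by (intro finite_row_lattice_Int_bounded) (simp_all add: centered_cube_def)
  ultimately show finite: "finite ?V" by (rule finite_subset)
  have "p + k \<in> ?T" if p: "p \<in> ?V" and k: "k \<in> K" for p k
  proof -
    obtain a where a: "a \<in> D" "xpart k = \<mu> *\<^sub>R a" "0 < ypart k" "ypart k \<le> Y" using K k by blast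
    have p_parts: "norm (xpart p) \<le> 2 * R" "0 < ypart p" "ypart p \<le> Y"
      using short_vector_parts[OF p assms(2)] by auto
    have "norm (xpart k) = \<mu> * norm a" using a(2) assms(3) by simp
    also have "\<dots> \<le> 1 * R" using a(1) assms(2-4) by (intro mult_mono) auto
    finally have "norm (xpart (p + k)) \<le> 3 * R"
      using norm_triangle_ineq[of "xpart p" "xpart k"] p_parts unfolding xpart_add by simp
    moreover have "\<bar>ypart (p + k)\<bar> \<le> 2 * Y" using a p_parts unfolding ypart_add by simp
    moreover have "R \<ge> 0" using assms(2) a(1) norm_ge_zero[of a] by (meson order_trans)
    moreover have "Y \<ge> 0" using a(3,4) by simp
    ultimately show ?thesis by (intro mem_centered_cube_if_parts) auto
  qed
  then show "real (card ?V) \<le> measure lebesgue ?T"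
    using card_row_lattice_subset_le_measure[of M K ?V ?T] assms(1) cover finite
    unfolding lattice_eq_row_lattice short_vectors_def centered_cube_def by auto
qed

lemma Gcount_le_measure_centered_cube:
  fixes D :: "(real^'n::finite) set" and M :: "'n mat1"
  assumes "det M = 1" "convex D" "\<forall>x\<in>D. norm x \<le> R" "0 \<le> \<mu>" "\<mu> \<le> 1"
    and cover: "\<forall>z. \<exists>k\<in>K. \<exists>l\<in>lattice M. z = k + l"
    and K: "\<forall>k\<in>K. (\<exists>a\<in>D. xpart k = \<mu> *\<^sub>R a) \<and> 0 < ypart k \<and> ypart k \<le> Y"
  shows "Gcount D M
           \<le> enat (nat \<lceil>measure lebesgue (centered_cube (3 * R + 2 * Y) :: (real^'n option) set)\<rceil>)"
proof -
  note card_bound = card_short_vectors_le_measure[OF assms(1,3-5) cover K]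
  have "\<forall>t\<in>D. \<exists>v\<in>lattice M. 0 < ypart v \<and> ypart v \<le> Y \<and> xpart v + t \<in> D"
    using exists_short_lattice_vector[OF assms(2) _ assms(4,5) cover K]
    by (simp add: lattice_eq_row_lattice row_lattice_uminus)
  then have "Gcount D M \<le> enat (card (short_vectors D M Y))"
    using Gcount_le_card_short_vectors card_bound(1) by blast
  also have "card (short_vectors D M Y)
               \<le> nat \<lceil>measure lebesgue (centered_cube (3 * R + 2 * Y) :: (real^'n option) set)\<rceil>"
    using card_bound(2) by linarith
  finally show ?thesis by simp
qed

(* The bound depends on \<theta> and D only through the cube centered_cube (3R + 2\<theta>^(d+1)). *)
theorem proposition2p4:
  fixes D :: "(real ^ 'n::finite) set"
    and C :: "('n mat1) set set"
    and \<theta> :: real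
  assumes "bounded D" and "convex D" and "interior D \<noteq> {}"
    and "C \<subseteq> GammaG" and "compactin quot_top C"
    and "\<theta> > 0"
    and "ereal \<theta> > rho_bar C (cyl D)"
  shows "\<exists>C\<^sub>\<theta>::nat. \<forall>M. M \<in> SLR \<and> coset M \<in> translate_set C \<theta> \<longrightarrow> Gcount D M \<le> enat C\<^sub>\<theta>"
proof -
  obtain R where R: "\<forall>x\<in>D. norm x \<le> R" using assms(1) bounded_iff by blast
  define Y where "Y = \<theta> ^ Suc CARD('n)"
  show ?thesis
  proof (intro exI allI impI)
    fix M :: "'n mat1" assume M: "M \<in> SLR \<and> coset M \<in> translate_set C \<theta>"
    then obtain \<theta>' where \<theta>': "0 < \<theta>'" "\<theta>' < \<theta>"
      and cover: "\<forall>z. \<exists>a\<in>cyl D. \<exists>l\<in>lattice M. z = \<theta>' *\<^sub>R (a v* Dmat (inverse \<theta>)) + l"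
      using covering_of_translate_set assms(6,7) by blast
    let ?K = "(\<lambda>a. \<theta>' *\<^sub>R (a v* Dmat (inverse \<theta>))) ` cyl D"
    show "Gcount D M
            \<le> enat (nat \<lceil>measure lebesgue (centered_cube (3 * R + 2 * Y) :: (real^'n option) set)\<rceil>)"
    proof (rule Gcount_le_measure_centered_cube[where \<mu> = "\<theta>' / \<theta>" and K = ?K])
      show "det M = 1" using M by (simp add: SLR_def)
      show "\<forall>z. \<exists>k\<in>?K. \<exists>l\<in>lattice M. z = k + l" using cover by blast
      show "\<forall>k\<in>?K. (\<exists>a\<in>D. xpart k = (\<theta>' / \<theta>) *\<^sub>R a) \<and> 0 < ypart k \<and> ypart k \<le> Y"
        using scaled_cyl_parts \<theta>' unfolding Y_def by blast
    qed (use assms(2,6) R \<theta>' in auto)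
  qed
qed

end
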